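(* Let $P\subset\mathbb{R}^4$ be the set of $(e_1,\dots,e_4)$ with $e_1\le e_2\le e_3\le e_4$ and $e_{i+j}\le e_i+e_j$ for all $i,j\ge1$ with $i+j\le4$. Let $Q\subset\mathbb{R}^4\times\mathbb{R}^5$ be the set of $(e_1,\dots,e_4,f_1,\dots,f_5)$ such that $e_1\le\dots\le e_4$, $f_1\le\dots\le f_5$, $2\sum_{k=1}^4e_k=\sum_{i=1}^5f_i$, and, writing $N=\sum_k e_k$ and $d^{(k)}_{ij}=f_i+f_j+e_k-N$: (i) $d^{(k)}_{ij}\ge0$ for all $1\le i<j\le5$, $1\le k\le4$ with $i+j+k=8$; (ii) if $d^{(1)}_{15}<0$, $d^{(1)}_{24}<0$ and $d^{(4)}_{12}<0$ then $d^{(1)}_{25}=0$. Let $\mathrm{pr}\colon\mathbb{R}^4\times\mathbb{R}^5\to\mathbb{R}^4$ be the projection to the first four coordinates. Then $\mathrm{pr}(Q\cap\mathbb{Z}^9)=P\cap\mathbb{Z}^4$. *)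

theory Defs
  imports Complex_Main
begin

text \<open>Points of R^4 and R^5 are represented as real lists of length 4 and 5;
  ent xs i is the 1-indexed coordinate x_i.\<close>

definition ent :: "real list \<Rightarrow> nat \<Rightarrow> real" where
  "ent xs i = xs ! (i - 1)"

definition P4 :: "real list set" where
  "P4 = {e. length e = 4
          \<and> (\<forall>i. 1 \<le> i \<and> i < 4 \<longrightarrow> ent e i \<le> ent e (i + 1))
          \<and> (\<forall>i j. 1 \<le> i \<and> 1 \<le> j \<and> i + j \<le> 4 \<longrightarrow> ent e (i + j) \<le> ent e i + ent e j)}"

definition dd :: "real list \<Rightarrow> real list \<Rightarrow> nat \<Rightarrow> nat \<Rightarrow> nat \<Rightarrow> real" where
  "dd e f k i j = ent f i + ent f j + ent e k - sum_list e"

definition Q45 :: "(real list \<times> real list) set" where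
  "Q45 = {(e, f). length e = 4 \<and> length f = 5
          \<and> (\<forall>i. 1 \<le> i \<and> i < 4 \<longrightarrow> ent e i \<le> ent e (i + 1))
          \<and> (\<forall>i. 1 \<le> i \<and> i < 5 \<longrightarrow> ent f i \<le> ent f (i + 1))
          \<and> 2 * sum_list e = sum_list f
          \<and> (\<forall>i j k. 1 \<le> i \<and> i < j \<and> j \<le> 5 \<and> 1 \<le> k \<and> k \<le> 4 \<and> i + j + k = 8
                \<longrightarrow> dd e f k i j \<ge> 0)
          \<and> (dd e f 1 1 5 < 0 \<and> dd e f 1 2 4 < 0 \<and> dd e f 4 1 2 < 0
                \<longrightarrow> dd e f 1 2 5 = 0)}"

definition int_pt :: "real list \<Rightarrow> bool" where
  "int_pt xs \<longleftrightarrow> set xs \<subseteq> \<int>"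

end

theory Submission
  imports Defs
begin

text \<open>Both inclusions already hold over the reals. For \<open>(e, f) \<in> Q\<close>, the sum of two suitable
  inequalities (i), together with \<open>\<Sum>f = 2N\<close>, bounds \<open>f\<^sub>1, \<dots>, f\<^sub>5\<close> from above by
  \<open>2e\<^sub>1, e\<^sub>1 + e\<^sub>2, e\<^sub>1 + e\<^sub>3, e\<^sub>2 + e\<^sub>3, e\<^sub>2 + e\<^sub>4\<close>; a single inequality (i) combined with one of
  these bounds gives \<open>e\<^sub>2 \<le> f\<^sub>1\<close>, \<open>e\<^sub>4 \<le> f\<^sub>3\<close>, \<open>e\<^sub>3 + e\<^sub>4 - e\<^sub>2 \<le> f\<^sub>4\<close>, \<open>e\<^sub>3 + e\<^sub>4 - e\<^sub>1 \<le> f\<^sub>5\<close>,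
  and comparing upper and lower bounds yields the four inequalities defining \<open>P\<close>.
  Conversely every \<open>e \<in> P\<close> has an explicit lift into \<open>Q\<close>, piecewise linear in \<open>e\<close> and built
  with \<open>+, -, min, max\<close> only, hence integral when \<open>e\<close> is.\<close>

lemma all_index_from_1_shift:
  "(\<forall>i. 1 \<le> i \<and> i < n \<longrightarrow> P i) \<longleftrightarrow> (\<forall>i. Suc i < n \<longrightarrow> P (Suc i))"
proof (intro iffI allI impI)
  fix i
  assume "\<forall>i. Suc i < n \<longrightarrow> P (Suc i)" "1 \<le> i \<and> i < n"
  then show "P i"
    by (cases i) auto
qed auto

lemma sorted_iff_ent:
  assumes "length xs = n"
  shows "sorted xs \<longleftrightarrow> (\<forall>i. 1 \<le> i \<and> i < n \<longrightarrow> ent xs i \<le> ent xs (i + 1))"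
  unfolding sorted_iff_nth_Suc all_index_from_1_shift ent_def assms[symmetric] by simp

lemma index_pair_sum_le_4_cases:
  fixes i j :: nat
  assumes "1 \<le> i" "1 \<le> j" "i + j \<le> 4"
  shows "(i, j) \<in> {(1, 1), (1, 2), (2, 1), (1, 3), (3, 1), (2, 2)}"
  using assms by auto

lemma all_index_pair_sum_le_4:
  "(\<forall>i j::nat. 1 \<le> i \<and> 1 \<le> j \<and> i + j \<le> 4 \<longrightarrow> P i j) \<longleftrightarrow>
     P 1 1 \<and> P 1 2 \<and> P 2 1 \<and> P 1 3 \<and> P 3 1 \<and> P 2 2"
  using index_pair_sum_le_4_cases by fastforce

lemma index_triple_sum_8_cases:
  fixes i j k :: nat
  assumes "1 \<le> i" "i < j" "j \<le> 5" "1 \<le> k" "k \<le> 4" "i + j + k = 8"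
  shows "(i, j, k) \<in> {(2, 5, 1), (3, 4, 1), (1, 5, 2), (2, 4, 2), (1, 4, 3), (2, 3, 3), (1, 3, 4)}"
proof -
  have "i = 1 \<or> i = 2 \<or> i = 3 \<or> i = 4" "j = 2 \<or> j = 3 \<or> j = 4 \<or> j = 5" "k = 8 - i - j"
    using assms by linarith+
  then show ?thesis
    using assms by (elim disjE) simp_all
qed

lemma all_index_triple_sum_8:
  "(\<forall>i j k::nat. 1 \<le> i \<and> i < j \<and> j \<le> 5 \<and> 1 \<le> k \<and> k \<le> 4 \<and> i + j + k = 8 \<longrightarrow> P i j k) \<longleftrightarrow>
     P 2 5 1 \<and> P 3 4 1 \<and> P 1 5 2 \<and> P 2 4 2 \<and> P 1 4 3 \<and> P 2 3 3 \<and> P 1 3 4"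
  using index_triple_sum_8_cases by fastforce

lemma length_4_cases:
  assumes "length xs = 4"
  obtains a b c d where "xs = [a, b, c, d]"
  using assms by (auto simp: numeral_eq_Suc length_Suc_conv)

lemma length_5_cases:
  assumes "length xs = 5"
  obtains a b c d g where "xs = [a, b, c, d, g]"
  using assms by (auto simp: numeral_eq_Suc length_Suc_conv)

lemma mem_P4_iff:
  "[a, b, c, d] \<in> P4 \<longleftrightarrow>
     a \<le> b \<and> b \<le> c \<and> c \<le> d \<and> b \<le> 2 * a \<and> c \<le> a + b \<and> d \<le> a + c \<and> d \<le> 2 * b"
proof -
  have sorted: "(\<forall>i. 1 \<le> i \<and> i < 4 \<longrightarrow> ent [a, b, c, d] i \<le> ent [a, b, c, d] (i + 1)) \<longleftrightarrow>
      sorted [a, b, c, d]"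
    by (rule sorted_iff_ent[symmetric]) simp
  show ?thesis
    unfolding P4_def mem_Collect_eq all_index_pair_sum_le_4 sorted
    by (simp add: ent_def sorted2_simps add.commute conj_left_absorb del: sorted_wrt.simps)
qed

lemma mem_Q45_iff:
  assumes "N = a + b + c + d"
  shows "([a, b, c, d], [f\<^sub>1, f\<^sub>2, f\<^sub>3, f\<^sub>4, f\<^sub>5]) \<in> Q45 \<longleftrightarrow>
     a \<le> b \<and> b \<le> c \<and> c \<le> d \<and> f\<^sub>1 \<le> f\<^sub>2 \<and> f\<^sub>2 \<le> f\<^sub>3 \<and> f\<^sub>3 \<le> f\<^sub>4 \<and> f\<^sub>4 \<le> f\<^sub>5 \<and>
     2 * N = f\<^sub>1 + f\<^sub>2 + f\<^sub>3 + f\<^sub>4 + f\<^sub>5 \<and>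
     N \<le> f\<^sub>2 + f\<^sub>5 + a \<and> N \<le> f\<^sub>3 + f\<^sub>4 + a \<and> N \<le> f\<^sub>1 + f\<^sub>5 + b \<and> N \<le> f\<^sub>2 + f\<^sub>4 + b \<and>
     N \<le> f\<^sub>1 + f\<^sub>4 + c \<and> N \<le> f\<^sub>2 + f\<^sub>3 + c \<and> N \<le> f\<^sub>1 + f\<^sub>3 + d \<and>
     (f\<^sub>1 + f\<^sub>5 + a < N \<and> f\<^sub>2 + f\<^sub>4 + a < N \<and> f\<^sub>1 + f\<^sub>2 + d < N \<longrightarrow> f\<^sub>2 + f\<^sub>5 + a = N)"
proof -
  let ?e = "[a, b, c, d]" and ?f = "[f\<^sub>1, f\<^sub>2, f\<^sub>3, f\<^sub>4, f\<^sub>5]"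
  have sorted_e: "(\<forall>i. 1 \<le> i \<and> i < 4 \<longrightarrow> ent ?e i \<le> ent ?e (i + 1)) \<longleftrightarrow> sorted ?e"
    by (rule sorted_iff_ent[symmetric]) simp
  have sorted_f: "(\<forall>i. 1 \<le> i \<and> i < 5 \<longrightarrow> ent ?f i \<le> ent ?f (i + 1)) \<longleftrightarrow> sorted ?f"
    by (rule sorted_iff_ent[symmetric]) simp
  have sum_e: "sum_list ?e = N"
    using assms by simp
  show ?thesis
    unfolding Q45_def mem_Collect_eq case_prod_conv all_index_triple_sum_8 sorted_e sorted_f dd_def sum_e
    by (simp add: ent_def sorted2_simps add.assoc del: sorted_wrt.simps)
qed

lemma fst_Q45_in_P4:
  assumes "(e, f) \<in> Q45"
  shows "e \<in> P4"
proof -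
  have "length e = 4" "length f = 5"
    using assms by (simp_all add: Q45_def)
  then obtain a b c d f\<^sub>1 f\<^sub>2 f\<^sub>3 f\<^sub>4 f\<^sub>5
    where e: "e = [a, b, c, d]" and f: "f = [f\<^sub>1, f\<^sub>2, f\<^sub>3, f\<^sub>4, f\<^sub>5]"
    by (metis length_4_cases length_5_cases)
  define N where "N = a + b + c + d"
  have Q: "a \<le> b \<and> b \<le> c \<and> c \<le> d \<and> f\<^sub>1 \<le> f\<^sub>2 \<and> f\<^sub>2 \<le> f\<^sub>3 \<and> f\<^sub>3 \<le> f\<^sub>4 \<and> f\<^sub>4 \<le> f\<^sub>5 \<and>
     2 * N = f\<^sub>1 + f\<^sub>2 + f\<^sub>3 + f\<^sub>4 + f\<^sub>5 \<and>
     N \<le> f\<^sub>2 + f\<^sub>5 + a \<and> N \<le> f\<^sub>3 + f\<^sub>4 + a \<and> N \<le> f\<^sub>1 + f\<^sub>5 + b \<and> N \<le> f\<^sub>2 + f\<^sub>4 + b \<and>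
     N \<le> f\<^sub>1 + f\<^sub>4 + c \<and> N \<le> f\<^sub>2 + f\<^sub>3 + c \<and> N \<le> f\<^sub>1 + f\<^sub>3 + d"
    using assms unfolding e f mem_Q45_iff[OF N_def] by blast
  have upper: "f\<^sub>1 \<le> 2 * a" "f\<^sub>2 \<le> a + b" "f\<^sub>3 \<le> a + c" "f\<^sub>4 \<le> b + c" "f\<^sub>5 \<le> b + d"
    using Q N_def by linarith+
  have lower: "b \<le> f\<^sub>1" "d \<le> f\<^sub>3" "c + d - b \<le> f\<^sub>4" "c + d - a \<le> f\<^sub>5"
    using Q upper N_def by linarith+
  show ?thesis
    unfolding e mem_P4_iff using Q upper lower by linarith
qed

lemma min_in_Ints: "x \<in> \<int> \<Longrightarrow> y \<in> \<int> \<Longrightarrow> min x y \<in> \<int>"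
  by (simp add: min_def)

lemma max_in_Ints: "x \<in> \<int> \<Longrightarrow> y \<in> \<int> \<Longrightarrow> max x y \<in> \<int>"
  by (simp add: max_def)

text \<open>\<open>s, u, v, q\<close> are the slacks of \<open>d \<le> a + c\<close>, \<open>b \<le> 2a\<close>, \<open>d \<le> 2b\<close>, \<open>b \<le> c\<close>. The lift makes
  \<open>dd e f 1 2 5\<close> vanish, so condition (ii) holds trivially, and the other six \<open>dd\<close> values in (i)
  become \<open>t - x\<^sub>4\<close>, \<open>x\<^sub>2 - x\<^sub>1\<close>, \<open>v - x\<^sub>2 - x\<^sub>4\<close>, \<open>s - t\<close>, \<open>t - x\<^sub>2\<close> and \<open>x\<^sub>4 - (s - u)\<close>.\<close>

definition P4_lift :: "real \<Rightarrow> real \<Rightarrow> real \<Rightarrow> real \<Rightarrow> real list" where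
  "P4_lift a b c d =
    (let s = a + c - d; u = 2 * a - b; v = 2 * b - d; q = c - b;
         t = min s v;
         x\<^sub>4 = max 0 (max (s - u) (s - q - t));
         x\<^sub>1 = t - x\<^sub>4;
         x\<^sub>2 = max x\<^sub>1 (s - q - x\<^sub>4)
     in [2 * a - x\<^sub>1, a + b - x\<^sub>2, d + t, b + c - x\<^sub>4, c + d - a + x\<^sub>2])"

lemma P4_lift_in_Q45:
  assumes "[a, b, c, d] \<in> P4"
  shows "([a, b, c, d], P4_lift a b c d) \<in> Q45"
proof -
  define s u v q where "s = a + c - d" and "u = 2 * a - b" and "v = 2 * b - d" and "q = c - b"
  define t where "t = min s v"
  define x\<^sub>4 where "x\<^sub>4 = max 0 (max (s - u) (s - q - t))"
  define x\<^sub>1 where "x\<^sub>1 = t - x\<^sub>4"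
  define x\<^sub>2 where "x\<^sub>2 = max x\<^sub>1 (s - q - x\<^sub>4)"
  have lift: "P4_lift a b c d = [2 * a - x\<^sub>1, a + b - x\<^sub>2, d + t, b + c - x\<^sub>4, c + d - a + x\<^sub>2]"
    unfolding P4_lift_def Let_def s_def u_def v_def q_def t_def x\<^sub>4_def x\<^sub>1_def x\<^sub>2_def ..
  have t: "t \<le> s" "t \<le> v" "t = s \<or> t = v"
    unfolding t_def by auto
  have x\<^sub>4: "0 \<le> x\<^sub>4" "s - u \<le> x\<^sub>4" "s - q - t \<le> x\<^sub>4" "x\<^sub>4 = 0 \<or> x\<^sub>4 = s - u \<or> x\<^sub>4 = s - q - t"
    unfolding x\<^sub>4_def by auto
  have x\<^sub>2: "x\<^sub>1 \<le> x\<^sub>2" "s - q - x\<^sub>4 \<le> x\<^sub>2" "x\<^sub>2 = x\<^sub>1 \<or> x\<^sub>2 = s - q - x\<^sub>4"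
    unfolding x\<^sub>2_def by auto
  show ?thesis
    using assms t x\<^sub>4 x\<^sub>2 x\<^sub>1_def s_def u_def v_def q_def
    unfolding lift mem_Q45_iff[OF refl] mem_P4_iff by argo
qed

lemma int_pt_P4_lift:
  assumes "a \<in> \<int>" "b \<in> \<int>" "c \<in> \<int>" "d \<in> \<int>"
  shows "int_pt (P4_lift a b c d)"
  unfolding P4_lift_def Let_def int_pt_def
  by (simp only: list.set insert_subset empty_subsetI simp_thms)
    (intro conjI Ints_add Ints_diff Ints_mult min_in_Ints max_in_Ints Ints_0 Ints_numeral assms)

theorem lemma6p2:
  shows "fst ` (Q45 \<inter> {(e, f). int_pt e \<and> int_pt f}) = P4 \<inter> {e. int_pt e}"
proof
  show "fst ` (Q45 \<inter> {(e, f). int_pt e \<and> int_pt f}) \<subseteq> P4 \<inter> {e. int_pt e}"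
    using fst_Q45_in_P4 by force
  show "P4 \<inter> {e. int_pt e} \<subseteq> fst ` (Q45 \<inter> {(e, f). int_pt e \<and> int_pt f})"
  proof
    fix e
    assume e: "e \<in> P4 \<inter> {e. int_pt e}"
    then have "length e = 4"
      by (simp add: P4_def)
    then obtain a b c d where "e = [a, b, c, d]"
      by (rule length_4_cases)
    then have "(e, P4_lift a b c d) \<in> Q45 \<inter> {(e, f). int_pt e \<and> int_pt f}"
      using e P4_lift_in_Q45 int_pt_P4_lift by (auto simp: int_pt_def)
    then show "e \<in> fst ` (Q45 \<inter> {(e, f). int_pt e \<and> int_pt f})"
      by force
  qed
qed

end
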